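(* Let $X$ be a compact topological space equipped with a continuous action of a sofic monoid $M$, let $\Sigma=(D_i,\sigma_i)_{i\in I}$ be a sofic approximation of $M$ with $\lim_{i\in I}|D_i|=\infty$, and let $\rho$ be a continuous pseudometric on $X$. Then $$h_\Sigma(X,M,\rho)=\sup_{\varepsilon>0}\inf_F\inf_{\delta>0}\limsup_{i\in I}\frac{1}{|D_i|}\log N_\varepsilon(\operatorname{Map}(X,M,\rho,F,\delta,\sigma_i),\rho_2^{D_i}),$$ where $\inf_F$ is over all finite subsets $F\subset M$.
   Context: Hamming metric on $\operatorname{Map}(D)$ (maps $D\to D$, $D$ finite non-empty): $d_D^{\mathrm{Ham}}(f,g)=\frac{1}{|D|}|\{v:f(v)\ne g(v)\}|$. A sofic approximation of a monoid $M$ is a net $(D_i,\sigma_i)_{i\in I}$ over a directed set, $D_i$ non-empty finite, $\sigma_i\colon M\to\operatorname{Map}(D_i)$, with $\sigma_i(1_M)=\mathrm{Id}_{D_i}$, $\lim_i d^{\mathrm{Ham}}_{D_i}(\sigma_i(m_1m_2),\sigma_i(m_1)\sigma_i(m_2))=0$ for all $m_1,m_2$, and $\lim_i d^{\mathrm{Ham}}_{D_i}(\sigma_i(m_1),\sigma_i(m_2))=1$ for all distinct $m_1,m_2$; $M$ is sofic iff it admits one. For non-empty finite $D$, on $X^D$ set $\rho_2^D(\varphi,\psi)=(\frac{1}{|D|}\sum_{v\in D}\rho(\varphi(v),\psi(v))^2)^{1/2}$, $\rho_\infty^D(\varphi,\psi)=\max_{v}\rho(\varphi(v),\psi(v))$,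 and $(m\varphi)(v)=m\varphi(v)$. For finite $F\subset M$, $\delta>0$, $\sigma\colon M\to\operatorname{Map}(D)$: $\operatorname{Map}(X,M,\rho,F,\delta,\sigma)=\{\varphi\in X^D:\rho_2^D(\varphi\circ\sigma(m),m\varphi)\le\delta\ \forall m\in F\}$. $N_\varepsilon(Z,d)$ is the maximal cardinality of a subset of $Z$ with pairwise $d$-distances $\ge\varepsilon$. The sofic topological entropy is $h_\Sigma(X,M,\rho)=\sup_{\varepsilon>0}\inf_F\inf_{\delta>0}\limsup_i\frac{1}{|D_i|}\log N_\varepsilon(\operatorname{Map}(X,M,\rho,F,\delta,\sigma_i),\rho_\infty^{D_i})$ ($\log 0=-\infty$). *)

theory Defs
  imports "HOL-Analysis.Analysis" "HOL-Library.Extended_Real"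
begin

definition directed_set :: "'i set \<Rightarrow> ('i \<Rightarrow> 'i \<Rightarrow> bool) \<Rightarrow> bool" where
  "directed_set I le \<longleftrightarrow> I \<noteq> {}
     \<and> (\<forall>a\<in>I. le a a)
     \<and> (\<forall>a\<in>I. \<forall>b\<in>I. \<forall>c\<in>I. le a b \<longrightarrow> le b c \<longrightarrow> le a c)
     \<and> (\<forall>a\<in>I. \<forall>b\<in>I. \<exists>c\<in>I. le a c \<and> le b c)"

definition net_filter :: "'i set \<Rightarrow> ('i \<Rightarrow> 'i \<Rightarrow> bool) \<Rightarrow> 'i filter" where
  "net_filter I le = (INF i\<in>I. principal {j\<in>I. le i j})"

definition hamming :: "'d set \<Rightarrow> ('d \<Rightarrow> 'd) \<Rightarrow> ('d \<Rightarrow> 'd) \<Rightarrow> real" where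
  "hamming D f g = real (card {v\<in>D. f v \<noteq> g v}) / real (card D)"

definition sofic_approximation ::
  "'i set \<Rightarrow> ('i \<Rightarrow> 'i \<Rightarrow> bool) \<Rightarrow> ('i \<Rightarrow> 'd set) \<Rightarrow> ('i \<Rightarrow> 'm::monoid_mult \<Rightarrow> 'd \<Rightarrow> 'd) \<Rightarrow> bool" where
  "sofic_approximation I le D \<sigma> \<longleftrightarrow>
     directed_set I le
   \<and> (\<forall>i\<in>I. finite (D i) \<and> D i \<noteq> {})
   \<and> (\<forall>i\<in>I. \<forall>m. \<forall>v\<in>D i. \<sigma> i m v \<in> D i)
   \<and> (\<forall>i\<in>I. \<forall>v\<in>D i. \<sigma> i 1 v = v)
   \<and> (\<forall>m1 m2. ((\<lambda>i. hamming (D i) (\<sigma> i (m1 * m2)) (\<sigma> i m1 \<circ> \<sigma> i m2))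
                  \<longlongrightarrow> 0) (net_filter I le))
   \<and> (\<forall>m1 m2. m1 \<noteq> m2 \<longrightarrow> ((\<lambda>i. hamming (D i) (\<sigma> i m1) (\<sigma> i m2))
                  \<longlongrightarrow> 1) (net_filter I le))"

definition rho2 :: "'d set \<Rightarrow> ('x \<Rightarrow> 'x \<Rightarrow> real) \<Rightarrow> ('d \<Rightarrow> 'x) \<Rightarrow> ('d \<Rightarrow> 'x) \<Rightarrow> real" where
  "rho2 D \<rho> \<phi> \<psi> = sqrt ((\<Sum>v\<in>D. (\<rho> (\<phi> v) (\<psi> v))\<^sup>2) / real (card D))"

definition rhoinf :: "'d set \<Rightarrow> ('x \<Rightarrow> 'x \<Rightarrow> real) \<Rightarrow> ('d \<Rightarrow> 'x) \<Rightarrow> ('d \<Rightarrow> 'x) \<Rightarrow> real" where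
  "rhoinf D \<rho> \<phi> \<psi> = Max ((\<lambda>v. \<rho> (\<phi> v) (\<psi> v)) ` D)"

text \<open>Elements of X^D are represented as extensional functions D \<rightarrow> X.\<close>
definition MapSet ::
  "('m \<Rightarrow> 'x \<Rightarrow> 'x) \<Rightarrow> ('x \<Rightarrow> 'x \<Rightarrow> real) \<Rightarrow> 'm set \<Rightarrow> real \<Rightarrow> 'd set \<Rightarrow> ('m \<Rightarrow> 'd \<Rightarrow> 'd)
     \<Rightarrow> ('d \<Rightarrow> 'x) set" where
  "MapSet act \<rho> F \<delta> D \<sigma> =
     {\<phi>. \<phi> \<in> extensional D \<and> (\<forall>m\<in>F. rho2 D \<rho> (\<phi> \<circ> \<sigma> m) (act m \<circ> \<phi>) \<le> \<delta>)}"

definition sep_number :: "real \<Rightarrow> 'a set \<Rightarrow> ('a \<Rightarrow> 'a \<Rightarrow> real) \<Rightarrow> ereal" where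
  "sep_number \<epsilon> Z d = (SUP S\<in>{S. S \<subseteq> Z \<and> finite S \<and>
        (\<forall>a\<in>S. \<forall>b\<in>S. a \<noteq> b \<longrightarrow> d a b \<ge> \<epsilon>)}. ereal (real (card S)))"

definition elog :: "ereal \<Rightarrow> ereal" where
  "elog x = (if x \<le> 0 then -\<infinity> else if x = \<infinity> then \<infinity> else ereal (ln (real_of_ereal x)))"

definition continuous_pseudometric :: "('x::topological_space \<Rightarrow> 'x \<Rightarrow> real) \<Rightarrow> bool" where
  "continuous_pseudometric \<rho> \<longleftrightarrow>
     (\<forall>x. \<rho> x x = 0) \<and> (\<forall>x y. \<rho> x y = \<rho> y x) \<and>
     (\<forall>x y z. \<rho> x z \<le> \<rho> x y + \<rho> y z) \<and>
     continuous_on UNIV (\<lambda>p. \<rho> (fst p) (snd p))"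

definition continuous_action :: "('m::monoid_mult \<Rightarrow> 'x::topological_space \<Rightarrow> 'x) \<Rightarrow> bool" where
  "continuous_action act \<longleftrightarrow>
     (\<forall>x. act 1 x = x) \<and> (\<forall>m1 m2 x. act (m1 * m2) x = act m1 (act m2 x)) \<and>
     (\<forall>m. continuous_on UNIV (act m))"

definition sofic_entropy ::
  "'i set \<Rightarrow> ('i \<Rightarrow> 'i \<Rightarrow> bool) \<Rightarrow> ('i \<Rightarrow> 'd set) \<Rightarrow> ('i \<Rightarrow> 'm \<Rightarrow> 'd \<Rightarrow> 'd)
     \<Rightarrow> ('m \<Rightarrow> 'x \<Rightarrow> 'x) \<Rightarrow> ('x \<Rightarrow> 'x \<Rightarrow> real) \<Rightarrow> ereal" where
  "sofic_entropy I le D \<sigma> act \<rho> =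
    (SUP \<epsilon>\<in>{0<..}. INF F\<in>{F. finite F}. INF \<delta>\<in>{0<..}.
       Limsup (net_filter I le)
         (\<lambda>i. ereal (1 / real (card (D i))) *
              elog (sep_number \<epsilon> (MapSet act \<rho> F \<delta> (D i) (\<sigma> i)) (rhoinf (D i) \<rho>))))"

end

theory Submission
  imports Defs
begin

text \<open>
  Since \<open>\<rho>\<^sub>2 \<le> \<rho>\<^sub>\<infinity>\<close> on \<open>X\<^sup>D\<close>, the \<open>\<rho>\<^sub>2\<close>-separation numbers are at most the
  \<open>\<rho>\<^sub>\<infinity>\<close>-ones. Conversely, fix \<open>\<epsilon>, \<kappa> > 0\<close> and a finite \<open>\<epsilon>/3\<close>-net \<open>C\<close> of the
  compact space \<open>X\<close>. An \<open>\<epsilon>\<close>-separated set for \<open>\<rho>\<^sub>\<infinity>\<close> is covered by the \<open>\<rho>\<^sub>2\<close>-balls of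
  radius \<open>\<epsilon>'\<close> around a maximal \<open>\<epsilon>'\<close>-separated subset for \<open>\<rho>\<^sub>2\<close>, and each ball contains
  few of its points: a point \<open>s\<close> of the ball around \<open>t\<close> is determined by the set \<open>J\<close> of
  coordinates where \<open>s\<close> is \<open>\<epsilon>/2\<close>-far from \<open>t\<close>, which by Chebyshev's inequality has at
  most \<open>(2\<epsilon>'/\<epsilon>)\<^sup>2 |D|\<close> elements, together with labels in \<open>C\<close> for the values of \<open>s\<close> on
  \<open>J\<close>. A binomial estimate bounds the number of such codes by \<open>exp (\<kappa> |D|)\<close> once \<open>\<epsilon>'\<close>
  is small, so \<open>N\<^sub>\<epsilon>(\<rho>\<^sub>\<infinity>) \<le> N\<^bsub>\<epsilon>'\<^esub>(\<rho>\<^sub>2) exp (\<kappa> |D|)\<close> uniformly in the finite set \<open>D\<close>.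
\<close>

definition separated :: "real \<Rightarrow> 'a set \<Rightarrow> ('a \<Rightarrow> 'a \<Rightarrow> real) \<Rightarrow> bool" where
  "separated \<epsilon> S d \<longleftrightarrow> (\<forall>a\<in>S. \<forall>b\<in>S. a \<noteq> b \<longrightarrow> \<epsilon> \<le> d a b)"

lemma sep_number_separated:
  "sep_number \<epsilon> Z d = (SUP S\<in>{S. S \<subseteq> Z \<and> finite S \<and> separated \<epsilon> S d}. ereal (real (card S)))"
  unfolding sep_number_def separated_def ..

lemma card_le_sep_number:
  "S \<subseteq> Z \<Longrightarrow> finite S \<Longrightarrow> separated \<epsilon> S d \<Longrightarrow> ereal (real (card S)) \<le> sep_number \<epsilon> Z d"
  unfolding sep_number_separated by (rule SUP_upper) simp

lemma separated_mono_dist: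
  "separated \<epsilon> S d \<Longrightarrow> (\<And>a b. a \<in> S \<Longrightarrow> b \<in> S \<Longrightarrow> d a b \<le> d' a b) \<Longrightarrow> separated \<epsilon> S d'"
  unfolding separated_def by (meson order_trans)

lemma sep_number_mono_dist:
  assumes "\<And>a b. a \<in> Z \<Longrightarrow> b \<in> Z \<Longrightarrow> d a b \<le> d' a b"
  shows "sep_number \<epsilon> Z d \<le> sep_number \<epsilon> Z d'"
  unfolding sep_number_separated
proof (rule SUP_subset_mono)
  show "{S. S \<subseteq> Z \<and> finite S \<and> separated \<epsilon> S d} \<subseteq> {S. S \<subseteq> Z \<and> finite S \<and> separated \<epsilon> S d'}"
    using assms by (auto intro: separated_mono_dist[where d = d])
qed simp

lemma finite_separated_net:
  fixes d :: "'a \<Rightarrow> 'a \<Rightarrow> real"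
  assumes "finite S" and sym: "\<And>a b. d a b = d b a" and small: "\<And>a. d a a < \<epsilon>"
  obtains T where "T \<subseteq> S" "separated \<epsilon> T d" "\<And>s. s \<in> S \<Longrightarrow> \<exists>t\<in>T. d s t < \<epsilon>"
  using assms(1)
proof (induction arbitrary: thesis rule: finite_induct)
  case empty
  show ?case by (rule empty) (auto simp: separated_def)
next
  case (insert x S)
  obtain T where T: "T \<subseteq> S" "separated \<epsilon> T d" and cover: "\<And>s. s \<in> S \<Longrightarrow> \<exists>t\<in>T. d s t < \<epsilon>"
    using insert.IH by blast
  show ?case
  proof (cases "\<exists>t\<in>T. d x t < \<epsilon>")
    case True
    show ?thesis
    proof (rule insert.prems)
      show "T \<subseteq> insert x S" using T(1) by blast
      show "separated \<epsilon> T d" by (fact T(2))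
      show "\<exists>t\<in>T. d s t < \<epsilon>" if "s \<in> insert x S" for s
        using that True cover by blast
    qed
  next
    case False
    show ?thesis
    proof (rule insert.prems)
      show "insert x T \<subseteq> insert x S" using T(1) by blast
      show "separated \<epsilon> (insert x T) d"
        using T(2) False sym unfolding separated_def by (metis insert_iff not_less)
      show "\<exists>t\<in>insert x T. d s t < \<epsilon>" if "s \<in> insert x S" for s
        using that small cover by blast
    qed
  qed
qed

lemma sep_number_le_sep_number_mult:
  fixes d d' :: "'a \<Rightarrow> 'a \<Rightarrow> real"
  assumes sym: "\<And>a b. d' a b = d' b a" and small: "\<And>a. d' a a < \<epsilon>'" and "0 \<le> B"
    and ball: "\<And>S t. S \<subseteq> Z \<Longrightarrow> finite S \<Longrightarrow> separated \<epsilon> S d \<Longrightarrow> t \<in> S \<Longrightarrow>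
                 real (card {s\<in>S. d' s t < \<epsilon>'}) \<le> B"
  shows "sep_number \<epsilon> Z d \<le> sep_number \<epsilon>' Z d' * ereal B"
  unfolding sep_number_separated[of \<epsilon>]
proof (rule SUP_least)
  fix S assume "S \<in> {S. S \<subseteq> Z \<and> finite S \<and> separated \<epsilon> S d}"
  then have S: "S \<subseteq> Z" "finite S" "separated \<epsilon> S d" by auto
  obtain T where T: "T \<subseteq> S" "separated \<epsilon>' T d'" and cover: "\<And>s. s \<in> S \<Longrightarrow> \<exists>t\<in>T. d' s t < \<epsilon>'"
    using finite_separated_net[where d = d' and \<epsilon> = \<epsilon>', OF S(2) sym small] by blast
  have finT: "finite T" using T(1) S(2) by (rule finite_subset)
  have "S \<subseteq> (\<Union>t\<in>T. {s\<in>S. d' s t < \<epsilon>'})" using cover by blast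
  then have "card S \<le> card (\<Union>t\<in>T. {s\<in>S. d' s t < \<epsilon>'})"
    using finT S(2) by (intro card_mono) auto
  also have "\<dots> \<le> (\<Sum>t\<in>T. card {s\<in>S. d' s t < \<epsilon>'})"
    using finT by (rule card_UN_le)
  finally have "real (card S) \<le> (\<Sum>t\<in>T. real (card {s\<in>S. d' s t < \<epsilon>'}))"
    by (simp only: of_nat_sum[symmetric] of_nat_le_iff)
  also have "\<dots> \<le> real (card T) * B"
  proof (rule sum_bounded_above)
    fix t assume "t \<in> T"
    then show "real (card {s\<in>S. d' s t < \<epsilon>'}) \<le> B" using ball[OF S] T(1) by blast
  qed
  finally have "ereal (real (card S)) \<le> ereal (real (card T)) * ereal B" by simp
  also have "\<dots> \<le> sep_number \<epsilon>' Z d' * ereal B"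
    using card_le_sep_number[of T Z] S(1) T finT \<open>0 \<le> B\<close>
    by (intro ereal_mult_right_mono) auto
  finally show "ereal (real (card S)) \<le> sep_number \<epsilon>' Z d' * ereal B" .
qed

lemma rho2_sym:
  assumes "\<And>x y. \<rho> x y = \<rho> y x"
  shows "rho2 D \<rho> \<phi> \<psi> = rho2 D \<rho> \<psi> \<phi>"
  unfolding rho2_def using assms by metis

lemma rho2_self: "(\<And>x. \<rho> x x = 0) \<Longrightarrow> rho2 D \<rho> \<phi> \<phi> = 0"
  unfolding rho2_def by simp

lemma rho2_nonneg: "0 \<le> rho2 D \<rho> \<phi> \<psi>"
  unfolding rho2_def by (intro real_sqrt_ge_zero divide_nonneg_nonneg sum_nonneg) auto

lemma sum_sq_eq_rho2: "(\<Sum>v\<in>D. (\<rho> (\<phi> v) (\<psi> v))\<^sup>2) = (rho2 D \<rho> \<phi> \<psi>)\<^sup>2 * real (card D)"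
proof (cases "card D = 0")
  case True
  then have "D = {} \<or> infinite D" by auto
  then show ?thesis using True by auto
next
  case False
  have "0 \<le> (\<Sum>v\<in>D. (\<rho> (\<phi> v) (\<psi> v))\<^sup>2) / real (card D)" by (simp add: sum_nonneg)
  then show ?thesis using False unfolding rho2_def by simp
qed

lemma rho2_le_rhoinf:
  assumes "finite D" "D \<noteq> {}" and nonneg: "\<And>x y. 0 \<le> \<rho> x y"
  shows "rho2 D \<rho> \<phi> \<psi> \<le> rhoinf D \<rho> \<phi> \<psi>"
proof -
  define M where "M = rhoinf D \<rho> \<phi> \<psi>"
  have le: "\<rho> (\<phi> v) (\<psi> v) \<le> M" if "v \<in> D" for v
    unfolding M_def rhoinf_def using assms(1) that by (intro Max_ge) auto
  obtain v where "v \<in> D" using assms(2) by blast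
  then have "0 \<le> M" using le[of v] nonneg[of "\<phi> v" "\<psi> v"] by linarith
  have "(\<Sum>v\<in>D. (\<rho> (\<phi> v) (\<psi> v))\<^sup>2) \<le> real (card D) * M\<^sup>2"
  proof (rule sum_bounded_above)
    fix v assume "v \<in> D"
    then show "(\<rho> (\<phi> v) (\<psi> v))\<^sup>2 \<le> M\<^sup>2" using le nonneg by (intro power_mono) auto
  qed
  then have "(rho2 D \<rho> \<phi> \<psi>)\<^sup>2 \<le> M\<^sup>2"
    using assms(1,2) by (simp add: sum_sq_eq_rho2 card_gt_0_iff mult.commute)
  then show ?thesis using \<open>0 \<le> M\<close> unfolding M_def by (simp add: power2_le_iff_abs_le)
qed

lemma rhoinf_less_iff:
  "finite D \<Longrightarrow> D \<noteq> {} \<Longrightarrow> rhoinf D \<rho> \<phi> \<psi> < e \<longleftrightarrow> (\<forall>v\<in>D. \<rho> (\<phi> v) (\<psi> v) < e)"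
  unfolding rhoinf_def by simp

lemma card_far_coordinates_le_rho2:
  assumes "finite D" "0 < a" "rho2 D \<rho> \<phi> \<psi> \<le> \<eta>"
  shows "real (card {v\<in>D. a \<le> \<rho> (\<phi> v) (\<psi> v)}) \<le> (\<eta> / a)\<^sup>2 * real (card D)"
proof -
  have "real (card {v\<in>D. a \<le> \<rho> (\<phi> v) (\<psi> v)}) * a\<^sup>2 = (\<Sum>v | v \<in> D \<and> a \<le> \<rho> (\<phi> v) (\<psi> v). a\<^sup>2)"
    by simp
  also have "\<dots> \<le> (\<Sum>v | v \<in> D \<and> a \<le> \<rho> (\<phi> v) (\<psi> v). (\<rho> (\<phi> v) (\<psi> v))\<^sup>2)"
    using assms(2) by (intro sum_mono power_mono) auto
  also have "\<dots> \<le> (\<Sum>v\<in>D. (\<rho> (\<phi> v) (\<psi> v))\<^sup>2)"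
    using assms(1) by (intro sum_mono2) auto
  also have "\<dots> \<le> \<eta>\<^sup>2 * real (card D)"
    unfolding sum_sq_eq_rho2 using assms(3) rho2_nonneg by (intro mult_right_mono power_mono) auto
  finally show ?thesis using assms(2) by (simp add: power_divide field_simps)
qed

text \<open>The weights \<open>p\<^bsup>|J|\<^esup> (1 - p)\<^bsup>|D - J|\<^esup>\<close> sum to \<open>1\<close>: they are the law of a random subset of \<open>D\<close>.\<close>
lemma card_small_subsets_le:
  fixes p r :: real
  assumes "finite D" "0 < p" "p < 1"
  shows "real (card {J\<in>Pow D. real (card J) \<le> r}) * (p powr r * (1 - p) ^ card D) \<le> 1"
proof -
  let ?JJ = "{J\<in>Pow D. real (card J) \<le> r}"
  have "real (card ?JJ) * (p powr r * (1 - p) ^ card D) = (\<Sum>J\<in>?JJ. p powr r * (1 - p) ^ card D)"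
    by simp
  also have "\<dots> \<le> (\<Sum>J\<in>?JJ. p ^ card J * (1 - p) ^ card (D - J))"
  proof (rule sum_mono)
    fix J assume J: "J \<in> ?JJ"
    then have "p powr r \<le> p ^ card J"
      using assms(2,3) powr_mono'[of "card J" r p] by (simp add: powr_realpow)
    moreover have "(1 - p) ^ card D \<le> (1 - p) ^ card (D - J)"
      using assms J by (intro power_decreasing) (auto intro: card_mono)
    ultimately show "p powr r * (1 - p) ^ card D \<le> p ^ card J * (1 - p) ^ card (D - J)"
      using assms(2,3) by (intro mult_mono) auto
  qed
  also have "\<dots> \<le> (\<Sum>J\<in>Pow D. p ^ card J * (1 - p) ^ card (D - J))"
    using assms by (intro sum_mono2) auto
  also have "\<dots> = (\<Prod>v\<in>D. p + (1 - p))"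
    using prod_add[OF assms(1), of "\<lambda>_. p" "\<lambda>_. 1 - p"] by simp
  finally show ?thesis by simp
qed

lemma card_Sigma_PiE_small_subsets_le:
  fixes r :: real
  assumes "finite D" "finite C" "C \<noteq> {}"
  shows "real (card (SIGMA J:{J\<in>Pow D. real (card J) \<le> r}. J \<rightarrow>\<^sub>E C))
           \<le> real (card {J\<in>Pow D. real (card J) \<le> r}) * real (card C) powr r"
proof -
  let ?JJ = "{J\<in>Pow D. real (card J) \<le> r}"
  have finJJ: "finite ?JJ" using assms(1) by simp
  have fin: "finite J" if "J \<in> ?JJ" for J
    using that assms(1) by (auto intro: rev_finite_subset)
  have K: "1 \<le> real (card C)" using assms(2,3) by (simp add: Suc_le_eq card_gt_0_iff)
  have "card (SIGMA J:?JJ. J \<rightarrow>\<^sub>E C) = (\<Sum>J\<in>?JJ. card (J \<rightarrow>\<^sub>E C))"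
    using fin assms(2) by (intro card_SigmaI finJJ ballI finite_PiE)
  also have "\<dots> = (\<Sum>J\<in>?JJ. card C ^ card J)"
    using fin by (intro sum.cong) (auto simp: card_PiE)
  finally have "real (card (SIGMA J:?JJ. J \<rightarrow>\<^sub>E C)) = (\<Sum>J\<in>?JJ. real (card C) ^ card J)"
    by simp
  also have "\<dots> \<le> (\<Sum>J\<in>?JJ. real (card C) powr r)"
  proof (rule sum_mono)
    fix J assume "J \<in> ?JJ"
    then have "real (card C) powr real (card J) \<le> real (card C) powr r"
      using K by (intro powr_mono) auto
    then show "real (card C) ^ card J \<le> real (card C) powr r"
      using K by (simp add: powr_realpow)
  qed
  finally show ?thesis by simp
qed

text \<open>\<open>p\<close> and \<open>\<tau>\<close> are chosen so that \<open>(1 - p)\<^bsup>-|D|\<^esup>\<close> and \<open>(K / p)\<^bsup>\<tau> |D|\<^esup>\<close> both equal \<open>exp (\<kappa> |D| / 2)\<close>.\<close>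
lemma small_subsets_powr_le_exp:
  fixes K \<kappa> :: real
  assumes "1 \<le> K" "0 < \<kappa>"
  obtains \<tau> where "0 < \<tau>"
    "\<And>D. finite D \<Longrightarrow> real (card {J\<in>Pow D. real (card J) \<le> \<tau> * real (card D)})
                          * K powr (\<tau> * real (card D)) \<le> exp (\<kappa> * real (card D))"
proof -
  define p where "p = 1 - exp (-\<kappa>/2)"
  have p: "0 < p" "p < 1" unfolding p_def using assms(2) by auto
  have "0 < ln K - ln p" using assms(1) p by (simp add: ln_ge_zero add_pos_nonneg)
  define \<tau> where "\<tau> = \<kappa>/2 / (ln K - ln p)"
  have "0 < \<tau>" unfolding \<tau>_def using \<open>0 < ln K - ln p\<close> assms(2) by simp
  have \<tau>: "\<tau> * (ln K - ln p) = \<kappa>/2"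
    using \<tau>_def \<open>0 < ln K - ln p\<close> by (simp add: nonzero_eq_divide_eq algebra_simps)
  show thesis
  proof (rule that[OF \<open>0 < \<tau>\<close>])
    fix D :: "'a set" assume "finite D"
    define n where "n = real (card D)"
    define JJ where "JJ = {J\<in>Pow D. real (card J) \<le> \<tau> * n}"
    have "(1 - p) ^ card D = exp (-\<kappa>/2 * n)"
      unfolding p_def n_def by (simp add: exp_of_nat_mult[symmetric] mult.commute)
    then have "real (card JJ) * (p powr (\<tau> * n) * exp (-\<kappa>/2 * n)) \<le> 1"
      using card_small_subsets_le[OF \<open>finite D\<close> p, of "\<tau> * n"] unfolding JJ_def by simp
    then have card_JJ: "real (card JJ) \<le> exp (\<kappa>/2 * n) / p powr (\<tau> * n)"
      using p by (simp add: field_simps exp_minus)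
    have "K powr (\<tau> * n) / p powr (\<tau> * n) = exp (\<tau> * n * ln K - \<tau> * n * ln p)"
      using assms(1) p by (simp add: powr_def exp_diff)
    also have "\<tau> * n * ln K - \<tau> * n * ln p = \<kappa>/2 * n"
      by (simp add: \<tau>[symmetric] algebra_simps)
    finally have ratio: "K powr (\<tau> * n) / p powr (\<tau> * n) = exp (\<kappa>/2 * n)" .
    have "real (card JJ) * K powr (\<tau> * n) \<le> exp (\<kappa>/2 * n) / p powr (\<tau> * n) * K powr (\<tau> * n)"
      by (rule mult_right_mono) (fact card_JJ, simp)
    also have "\<dots> = exp (\<kappa>/2 * n) * (K powr (\<tau> * n) / p powr (\<tau> * n))"
      by simp
    also have "\<dots> = exp (\<kappa>/2 * n) * exp (\<kappa>/2 * n)"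
      by (simp only: ratio)
    also have "\<dots> = exp (\<kappa> * n)" by (simp add: exp_add[symmetric])
    finally show "real (card {J\<in>Pow D. real (card J) \<le> \<tau> * real (card D)})
                    * K powr (\<tau> * real (card D)) \<le> exp (\<kappa> * real (card D))"
      unfolding JJ_def n_def .
  qed
qed

locale pseudometric =
  fixes \<rho> :: "'x \<Rightarrow> 'x \<Rightarrow> real"
  assumes refl: "\<rho> x x = 0"
    and sym: "\<rho> x y = \<rho> y x"
    and triangle: "\<rho> x y \<le> \<rho> x z + \<rho> z y"
begin

lemma nonneg: "0 \<le> \<rho> x y"
  using triangle[of x x y] sym[of y x] refl[of x] by linarith

lemma rhoinf_less_of_common_code:
  assumes "finite D" "D \<noteq> {}"
    and near: "\<And>v. v \<in> D - J \<Longrightarrow> \<rho> (a v) (t v) < \<epsilon>/2 \<and> \<rho> (b v) (t v) < \<epsilon>/2"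
    and labelled: "\<And>v. v \<in> J \<Longrightarrow> \<exists>c. \<rho> c (a v) < \<epsilon>/3 \<and> \<rho> c (b v) < \<epsilon>/3"
  shows "rhoinf D \<rho> a b < \<epsilon>"
  unfolding rhoinf_less_iff[OF assms(1,2)]
proof
  fix v assume "v \<in> D"
  show "\<rho> (a v) (b v) < \<epsilon>"
  proof (cases "v \<in> J")
    case True
    then obtain c where "\<rho> c (a v) < \<epsilon>/3" "\<rho> c (b v) < \<epsilon>/3" using labelled by blast
    then show ?thesis using triangle[of "a v" "b v" c] sym[of "a v" c] nonneg[of c "a v"] by linarith
  next
    case False
    then have "\<rho> (a v) (t v) < \<epsilon>/2" "\<rho> (b v) (t v) < \<epsilon>/2" using near \<open>v \<in> D\<close> by auto
    then show ?thesis using triangle[of "a v" "b v" "t v"] sym[of "t v" "b v"] by linarith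
  qed
qed

lemma inj_on_far_code:
  fixes t :: "'d \<Rightarrow> 'x"
  assumes D: "finite D" "D \<noteq> {}" and S: "separated \<epsilon> S (rhoinf D \<rho>)"
    and c: "\<And>y. \<rho> (c y) y < \<epsilon>/3"
  defines "far \<equiv> \<lambda>s. {v\<in>D. \<epsilon>/2 \<le> \<rho> (s v) (t v)}"
  shows "inj_on (\<lambda>s. (far s, restrict (c \<circ> s) (far s))) S"
proof (rule inj_onI, rule ccontr)
  fix a b assume "a \<in> S" "b \<in> S" "a \<noteq> b"
    and code_eq: "(far a, restrict (c \<circ> a) (far a)) = (far b, restrict (c \<circ> b) (far b))"
  from code_eq have "far a = far b \<and> restrict (c \<circ> a) (far a) = restrict (c \<circ> b) (far b)"
    unfolding prod.inject .
  then have far_eq: "far a = far b" and restr: "restrict (c \<circ> a) (far a) = restrict (c \<circ> b) (far b)"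
    by blast+
  have "rhoinf D \<rho> a b < \<epsilon>"
  proof (rule rhoinf_less_of_common_code[OF D, where J = "far a" and t = t])
    show "\<rho> (a v) (t v) < \<epsilon>/2 \<and> \<rho> (b v) (t v) < \<epsilon>/2" if "v \<in> D - far a" for v
    proof -
      have "v \<in> D" "v \<notin> far a" "v \<notin> far b" using that far_eq by auto
      then show ?thesis by (simp add: far_def not_le)
    qed
    show "\<exists>c'. \<rho> c' (a v) < \<epsilon>/3 \<and> \<rho> c' (b v) < \<epsilon>/3" if "v \<in> far a" for v
    proof -
      have "c (a v) = c (b v)" using fun_cong[OF restr, of v] that far_eq by simp
      then show ?thesis using c[of "a v"] c[of "b v"] by (intro exI[of _ "c (a v)"]) simp
    qed
  qed
  moreover have "\<epsilon> \<le> rhoinf D \<rho> a b"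
    using S \<open>a \<in> S\<close> \<open>b \<in> S\<close> \<open>a \<noteq> b\<close> unfolding separated_def by blast
  ultimately show False by simp
qed

text \<open>The code of \<open>s\<close> is the set \<open>J\<close> of coordinates where \<open>s\<close> is far from \<open>t\<close>, whose size
  Chebyshev's inequality controls, together with net points labelling the values of \<open>s\<close> on \<open>J\<close>.\<close>
lemma card_rho2_ball_le:
  fixes D :: "'d set" and S :: "('d \<Rightarrow> 'x) set" and \<eta> :: real
  assumes D: "finite D" "D \<noteq> {}" and C: "finite C" "\<And>y. \<exists>c\<in>C. \<rho> c y < \<epsilon>/3" and "0 < \<epsilon>"
    and S: "separated \<epsilon> S (rhoinf D \<rho>)"
  defines "r \<equiv> (2 * \<eta> / \<epsilon>)\<^sup>2 * real (card D)"
  shows "real (card {s\<in>S. rho2 D \<rho> s t < \<eta>})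
           \<le> real (card {J\<in>Pow D. real (card J) \<le> r}) * real (card C) powr r"
proof -
  let ?B = "{s\<in>S. rho2 D \<rho> s t < \<eta>}"
  let ?JJ = "{J\<in>Pow D. real (card J) \<le> r}"
  define far where "far s = {v\<in>D. \<epsilon>/2 \<le> \<rho> (s v) (t v)}" for s
  define c where "c y = (SOME c. c \<in> C \<and> \<rho> c y < \<epsilon>/3)" for y
  have c: "c y \<in> C" "\<rho> (c y) y < \<epsilon>/3" for y
    using someI_ex[OF C(2)[of y, unfolded Bex_def]] unfolding c_def by auto
  define code where "code s = (far s, restrict (c \<circ> s) (far s))" for s
  have "inj_on code ?B"
    using inj_on_far_code[OF D S c(2)] unfolding code_def far_def by (rule inj_on_subset) blast
  moreover have "code ` ?B \<subseteq> (SIGMA J:?JJ. J \<rightarrow>\<^sub>E C)"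
  proof (rule image_subsetI)
    fix s assume "s \<in> ?B"
    then have "real (card (far s)) \<le> (\<eta> / (\<epsilon>/2))\<^sup>2 * real (card D)"
      unfolding far_def using \<open>0 < \<epsilon>\<close> by (intro card_far_coordinates_le_rho2 D(1)) auto
    also have "\<eta> / (\<epsilon>/2) = 2 * \<eta> / \<epsilon>" by simp
    finally have "real (card (far s)) \<le> r" unfolding r_def .
    moreover have "far s \<subseteq> D" unfolding far_def by blast
    moreover have "restrict (c \<circ> s) (far s) \<in> far s \<rightarrow>\<^sub>E C" using c(1) by simp
    ultimately show "code s \<in> (SIGMA J:?JJ. J \<rightarrow>\<^sub>E C)" unfolding code_def by blast
  qed
  moreover have "finite (SIGMA J:?JJ. J \<rightarrow>\<^sub>E C)"
  proof (rule finite_SigmaI)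
    show "finite ?JJ" using D(1) by simp
    show "finite (J \<rightarrow>\<^sub>E C)" if "J \<in> ?JJ" for J
      using that D(1) C(1) by (auto intro: finite_PiE rev_finite_subset)
  qed
  ultimately have "card ?B \<le> card (SIGMA J:?JJ. J \<rightarrow>\<^sub>E C)" by (rule card_inj_on_le)
  then have "real (card ?B) \<le> real (card (SIGMA J:?JJ. J \<rightarrow>\<^sub>E C))" by simp
  also have "\<dots> \<le> real (card ?JJ) * real (card C) powr r"
    using D(1) C by (intro card_Sigma_PiE_small_subsets_le) auto
  finally show ?thesis .
qed

lemma sep_number_rhoinf_le_rho2:
  assumes C: "finite C" "\<And>y. \<exists>c\<in>C. \<rho> c y < \<epsilon>/3" and "0 < \<epsilon>" "0 < \<kappa>"
  obtains \<epsilon>' where "0 < \<epsilon>'"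
    "\<And>(D :: 'd set) (Z :: ('d \<Rightarrow> 'x) set). finite D \<Longrightarrow> D \<noteq> {} \<Longrightarrow>
       sep_number \<epsilon> Z (rhoinf D \<rho>) \<le> sep_number \<epsilon>' Z (rho2 D \<rho>) * ereal (exp (\<kappa> * real (card D)))"
proof -
  have "C \<noteq> {}" using C(2) by blast
  then have "1 \<le> real (card C)" using C(1) by (simp add: Suc_le_eq card_gt_0_iff)
  then obtain \<tau> where "0 < \<tau>" and growth: "\<And>D :: 'd set. finite D \<Longrightarrow>
      real (card {J\<in>Pow D. real (card J) \<le> \<tau> * real (card D)}) * real (card C) powr (\<tau> * real (card D))
        \<le> exp (\<kappa> * real (card D))"
    using small_subsets_powr_le_exp[of "real (card C)" \<kappa>] \<open>0 < \<kappa>\<close> by blast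
  define \<epsilon>' where "\<epsilon>' = \<epsilon> * sqrt \<tau> / 2" \<comment> \<open>so that the codes have at most \<open>\<tau> |D|\<close> far coordinates\<close>
  have "0 < \<epsilon>'" unfolding \<epsilon>'_def using \<open>0 < \<epsilon>\<close> \<open>0 < \<tau>\<close> by simp
  have \<tau>: "(2 * \<epsilon>' / \<epsilon>)\<^sup>2 = \<tau>"
    unfolding \<epsilon>'_def using \<open>0 < \<epsilon>\<close> \<open>0 < \<tau>\<close> by (simp add: power_divide power_mult_distrib)
  show thesis
  proof (rule that[OF \<open>0 < \<epsilon>'\<close>])
    fix D :: "'d set" and Z :: "('d \<Rightarrow> 'x) set"
    assume D: "finite D" "D \<noteq> {}"
    show "sep_number \<epsilon> Z (rhoinf D \<rho>) \<le> sep_number \<epsilon>' Z (rho2 D \<rho>) * ereal (exp (\<kappa> * real (card D)))"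
    proof (rule sep_number_le_sep_number_mult)
      show "rho2 D \<rho> a b = rho2 D \<rho> b a" for a b by (rule rho2_sym) (rule sym)
      show "rho2 D \<rho> a a < \<epsilon>'" for a using rho2_self[of \<rho> D a, OF refl] \<open>0 < \<epsilon>'\<close> by simp
      fix S t assume "separated \<epsilon> S (rhoinf D \<rho>)"
      then have "real (card {s\<in>S. rho2 D \<rho> s t < \<epsilon>'})
          \<le> real (card {J\<in>Pow D. real (card J) \<le> \<tau> * real (card D)}) * real (card C) powr (\<tau> * real (card D))"
        using card_rho2_ball_le[OF D C \<open>0 < \<epsilon>\<close>, where S = S and \<eta> = \<epsilon>' and t = t] by (simp only: \<tau>)
      also have "\<dots> \<le> exp (\<kappa> * real (card D))" using growth D(1) .
      finally show "real (card {s\<in>S. rho2 D \<rho> s t < \<epsilon>'}) \<le> exp (\<kappa> * real (card D))" .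
    qed simp
  qed
qed

end

lemma continuous_pseudometricD:
  assumes "continuous_pseudometric \<rho>"
  shows "pseudometric \<rho>" and "continuous_on UNIV (\<rho> c)"
proof -
  show "pseudometric \<rho>"
    using assms unfolding continuous_pseudometric_def pseudometric_def by blast
  have "continuous_on UNIV (\<lambda>p. \<rho> (fst p) (snd p))"
    using assms unfolding continuous_pseudometric_def by blast
  then have "continuous_on UNIV ((\<lambda>p. \<rho> (fst p) (snd p)) \<circ> Pair c)"
    by (intro continuous_on_compose continuous_intros) (auto elim: continuous_on_subset)
  then show "continuous_on UNIV (\<rho> c)" by (simp add: o_def)
qed

lemma compact_finite_net:
  fixes \<rho> :: "'x::topological_space \<Rightarrow> 'x \<Rightarrow> real"
  assumes "compact (UNIV :: 'x set)" and "\<And>c. continuous_on UNIV (\<rho> c)" and "\<And>x. \<rho> x x < e"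
  obtains C where "finite C" "\<And>y. \<exists>c\<in>C. \<rho> c y < e"
proof -
  have "open {y. \<rho> c y < e}" for c
    using open_Collect_less[OF assms(2) continuous_on_const] by simp
  moreover have "UNIV \<subseteq> (\<Union>c. {y. \<rho> c y < e})" using assms(3) by blast
  ultimately obtain C where "finite C" "UNIV \<subseteq> (\<Union>c\<in>C. {y. \<rho> c y < e})"
    using compactE_image[OF assms(1)] by metis
  then show thesis using that by blast
qed

lemma elog_mono: "A \<le> B \<Longrightarrow> elog A \<le> elog B"
  unfolding elog_def by (cases A; cases B) auto

lemma elog_le_elog_add:
  assumes "A \<le> B * ereal c" and "0 < c"
  shows "elog A \<le> elog B + ereal (ln c)"
proof (cases "A \<le> 0")
  case True
  then show ?thesis by (simp add: elog_def)
next
  case False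
  then have "0 < B * ereal c" using assms(1) by simp
  then have "0 < B" using \<open>0 < c\<close> by (cases B) (auto simp: zero_less_mult_iff)
  show ?thesis
  proof (cases "B = \<infinity>")
    case True
    then show ?thesis by (simp add: elog_def)
  next
    case False
    then obtain b where b: "B = ereal b" "0 < b" using \<open>0 < B\<close> by (cases B) auto
    then obtain a where a: "A = ereal a" "0 < a" "a \<le> b * c"
      using assms(1) \<open>\<not> A \<le> 0\<close> by (cases A) auto
    then have "ln a \<le> ln (b * c)" using b \<open>0 < c\<close> by simp
    also have "\<dots> = ln b + ln c" using b \<open>0 < c\<close> by (simp add: ln_mult)
    finally have "ln a \<le> ln b + ln c" .
    then show ?thesis using a b by (simp add: elog_def)
  qed
qed

lemma normalized_elog_le:
  assumes "A \<le> B * ereal (exp (\<kappa> * n))" and "0 < n"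
  shows "ereal (1 / n) * elog A \<le> ereal (1 / n) * elog B + ereal \<kappa>"
proof -
  have "elog A \<le> elog B + ereal (\<kappa> * n)"
    using elog_le_elog_add[OF assms(1)] by simp
  then have "ereal (1 / n) * elog A \<le> ereal (1 / n) * (elog B + ereal (\<kappa> * n))"
    using \<open>0 < n\<close> by (intro ereal_mult_left_mono) auto
  also have "\<dots> = ereal (1 / n) * elog B + ereal \<kappa>"
    using \<open>0 < n\<close> by (simp add: ereal_distrib_left)
  finally show ?thesis .
qed

lemma Limsup_le_Limsup_add:
  fixes f g :: "'a \<Rightarrow> ereal"
  assumes "eventually (\<lambda>x. f x \<le> g x + ereal c) F"
  shows "Limsup F f \<le> Limsup F g + ereal c"
proof (cases "F = bot")
  case False
  have "Limsup F f \<le> Limsup F (\<lambda>x. g x + ereal c)" using assms by (rule Limsup_mono)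
  also have "\<dots> = Limsup F g + ereal c" using False by (simp add: Limsup_add_ereal_right)
  finally show ?thesis .
qed simp

lemma INF_le_INF_add:
  fixes u v :: "'a \<Rightarrow> ereal"
  assumes "\<And>a. a \<in> A \<Longrightarrow> u a \<le> v a + ereal c"
  shows "(INF a\<in>A. u a) \<le> (INF a\<in>A. v a) + ereal c"
proof -
  have "(INF a\<in>A. u a) - ereal c \<le> (INF a\<in>A. v a)"
  proof (rule INF_greatest)
    fix a assume "a \<in> A"
    then have "(INF a\<in>A. u a) \<le> v a + ereal c" using assms by (meson INF_lower order_trans)
    then show "(INF a\<in>A. u a) - ereal c \<le> v a" by (simp add: ereal_minus_le)
  qed
  then show ?thesis by (simp add: ereal_minus_le)
qed

lemma SUP_eq_SUP_if_approx:
  fixes f g :: "'a \<Rightarrow> ereal"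
  assumes "\<And>e. e \<in> E \<Longrightarrow> g e \<le> f e"
    and "\<And>e \<kappa>. e \<in> E \<Longrightarrow> 0 < \<kappa> \<Longrightarrow> \<exists>e'\<in>E. f e \<le> g e' + ereal \<kappa>"
  shows "(SUP e\<in>E. f e) = (SUP e\<in>E. g e)"
proof (rule antisym)
  show "(SUP e\<in>E. f e) \<le> (SUP e\<in>E. g e)"
  proof (rule SUP_least)
    fix e assume "e \<in> E"
    show "f e \<le> (SUP e\<in>E. g e)"
    proof (rule ereal_le_epsilon2)
      fix \<kappa> :: real assume "0 < \<kappa>"
      then obtain e' where "e' \<in> E" "f e \<le> g e' + ereal \<kappa>" using assms(2) \<open>e \<in> E\<close> by blast
      then show "f e \<le> (SUP e\<in>E. g e) + ereal \<kappa>" by (meson SUP_upper add_right_mono order_trans)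
    qed
  qed
  show "(SUP e\<in>E. g e) \<le> (SUP e\<in>E. f e)" by (rule SUP_mono) (use assms(1) in blast)
qed

lemma sofic_approximationD:
  assumes "sofic_approximation I le D \<sigma>"
  shows "I \<noteq> {}" and "i \<in> I \<Longrightarrow> finite (D i)" and "i \<in> I \<Longrightarrow> D i \<noteq> {}"
proof -
  have "directed_set I le"
    using assms unfolding sofic_approximation_def by (rule conjunct1)
  then show "I \<noteq> {}" unfolding directed_set_def by (rule conjunct1)
  have "\<forall>i\<in>I. finite (D i) \<and> D i \<noteq> {}"
    using assms unfolding sofic_approximation_def by (rule conjunct1[OF conjunct2])
  then show "i \<in> I \<Longrightarrow> finite (D i)" and "i \<in> I \<Longrightarrow> D i \<noteq> {}" by simp_all
qed

lemma eventually_in_net_filter: "I \<noteq> {} \<Longrightarrow> eventually (\<lambda>i. i \<in> I) (net_filter I le)"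
  unfolding net_filter_def by (auto intro: eventually_INF1 simp: eventually_principal)

definition sofic_sep_growth ::
  "'i set \<Rightarrow> ('i \<Rightarrow> 'i \<Rightarrow> bool) \<Rightarrow> ('i \<Rightarrow> 'd set) \<Rightarrow> ('i \<Rightarrow> 'm \<Rightarrow> 'd \<Rightarrow> 'd)
     \<Rightarrow> ('m \<Rightarrow> 'x \<Rightarrow> 'x) \<Rightarrow> ('x \<Rightarrow> 'x \<Rightarrow> real)
     \<Rightarrow> ('d set \<Rightarrow> ('x \<Rightarrow> 'x \<Rightarrow> real) \<Rightarrow> ('d \<Rightarrow> 'x) \<Rightarrow> ('d \<Rightarrow> 'x) \<Rightarrow> real)
     \<Rightarrow> real \<Rightarrow> 'm set \<Rightarrow> real \<Rightarrow> ereal" where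
  "sofic_sep_growth I le D \<sigma> act \<rho> d \<epsilon> F \<delta> =
     Limsup (net_filter I le)
       (\<lambda>i. ereal (1 / real (card (D i))) *
            elog (sep_number \<epsilon> (MapSet act \<rho> F \<delta> (D i) (\<sigma> i)) (d (D i) \<rho>)))"

lemma sofic_sep_growth_rho2_le_rhoinf:
  assumes "sofic_approximation I le D \<sigma>" and "pseudometric \<rho>"
  shows "sofic_sep_growth I le D \<sigma> act \<rho> rho2 \<epsilon> F \<delta> \<le> sofic_sep_growth I le D \<sigma> act \<rho> rhoinf \<epsilon> F \<delta>"
proof -
  have "eventually (\<lambda>i. i \<in> I) (net_filter I le)"
    using sofic_approximationD(1)[OF assms(1)] by (rule eventually_in_net_filter)
  then show ?thesis
    unfolding sofic_sep_growth_def
    by (intro Limsup_mono eventually_mono[OF \<open>eventually _ _\<close>] ereal_mult_left_mono elog_mono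
        sep_number_mono_dist rho2_le_rhoinf pseudometric.nonneg[OF assms(2)])
      (auto dest: sofic_approximationD(2,3)[OF assms(1)])
qed

lemma sofic_sep_growth_rhoinf_le_rho2:
  fixes \<rho> :: "'x::topological_space \<Rightarrow> 'x \<Rightarrow> real" and D :: "'i \<Rightarrow> 'd set"
  assumes "compact (UNIV :: 'x set)" and "continuous_pseudometric \<rho>"
    and "sofic_approximation I le D \<sigma>" and \<epsilon>: "0 < \<epsilon>" and \<kappa>: "0 < \<kappa>"
  shows "\<exists>\<epsilon>'>0. \<forall>F \<delta>. sofic_sep_growth I le D \<sigma> act \<rho> rhoinf \<epsilon> F \<delta>
                      \<le> sofic_sep_growth I le D \<sigma> act \<rho> rho2 \<epsilon>' F \<delta> + ereal \<kappa>"
proof -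
  have \<rho>: "pseudometric \<rho>" and cont: "\<And>c. continuous_on UNIV (\<rho> c)"
    by (fact continuous_pseudometricD[OF assms(2)])+
  have small: "\<rho> x x < \<epsilon>/3" for x using pseudometric.refl[OF \<rho>] \<epsilon> by simp
  obtain C where C: "finite C" "\<And>y. \<exists>c\<in>C. \<rho> c y < \<epsilon>/3"
    using compact_finite_net[OF assms(1) cont small] by metis
  obtain \<epsilon>' where "0 < \<epsilon>'" and sep: "\<And>(D' :: 'd set) Z. finite D' \<Longrightarrow> D' \<noteq> {} \<Longrightarrow>
      sep_number \<epsilon> Z (rhoinf D' \<rho>) \<le> sep_number \<epsilon>' Z (rho2 D' \<rho>) * ereal (exp (\<kappa> * real (card D')))"
    using pseudometric.sep_number_rhoinf_le_rho2[OF \<rho> C \<epsilon> \<kappa>] by metis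
  have evI: "eventually (\<lambda>i. i \<in> I) (net_filter I le)"
    using sofic_approximationD(1)[OF assms(3)] by (rule eventually_in_net_filter)
  have "sofic_sep_growth I le D \<sigma> act \<rho> rhoinf \<epsilon> F \<delta>
          \<le> sofic_sep_growth I le D \<sigma> act \<rho> rho2 \<epsilon>' F \<delta> + ereal \<kappa>" for F \<delta>
    unfolding sofic_sep_growth_def
    by (intro Limsup_le_Limsup_add eventually_mono[OF evI] normalized_elog_le sep)
      (auto dest: sofic_approximationD(2,3)[OF assms(3)] simp: card_gt_0_iff)
  then show ?thesis using \<open>0 < \<epsilon>'\<close> by blast
qed

theorem proposition4p3:
  fixes act :: "'m::monoid_mult \<Rightarrow> 'x::topological_space \<Rightarrow> 'x"
    and \<rho> :: "'x \<Rightarrow> 'x \<Rightarrow> real"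
    and I :: "'i set" and le :: "'i \<Rightarrow> 'i \<Rightarrow> bool"
    and D :: "'i \<Rightarrow> 'd set" and \<sigma> :: "'i \<Rightarrow> 'm \<Rightarrow> 'd \<Rightarrow> 'd"
  assumes "compact (UNIV :: 'x set)"
    and "continuous_action act"
    and "sofic_approximation I le D \<sigma>"
    and "filterlim (\<lambda>i. real (card (D i))) at_top (net_filter I le)"
    and "continuous_pseudometric \<rho>"
  shows "sofic_entropy I le D \<sigma> act \<rho> =
    (SUP \<epsilon>\<in>{0<..}. INF F\<in>{F. finite F}. INF \<delta>\<in>{0<..}.
       Limsup (net_filter I le)
         (\<lambda>i. ereal (1 / real (card (D i))) *
              elog (sep_number \<epsilon> (MapSet act \<rho> F \<delta> (D i) (\<sigma> i)) (rho2 (D i) \<rho>))))"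
proof -
  have "sofic_entropy I le D \<sigma> act \<rho>
      = (SUP \<epsilon>\<in>{0<..}. INF F\<in>{F. finite F}. INF \<delta>\<in>{0<..}. sofic_sep_growth I le D \<sigma> act \<rho> rhoinf \<epsilon> F \<delta>)"
    unfolding sofic_entropy_def sofic_sep_growth_def ..
  also have "\<dots> = (SUP \<epsilon>\<in>{0<..}. INF F\<in>{F. finite F}. INF \<delta>\<in>{0<..}. sofic_sep_growth I le D \<sigma> act \<rho> rho2 \<epsilon> F \<delta>)"
  proof (rule SUP_eq_SUP_if_approx)
    show "(INF F\<in>{F. finite F}. INF \<delta>\<in>{0<..}. sofic_sep_growth I le D \<sigma> act \<rho> rho2 \<epsilon> F \<delta>)
        \<le> (INF F\<in>{F. finite F}. INF \<delta>\<in>{0<..}. sofic_sep_growth I le D \<sigma> act \<rho> rhoinf \<epsilon> F \<delta>)" for \<epsilon>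
      using sofic_sep_growth_rho2_le_rhoinf[OF assms(3) continuous_pseudometricD(1)[OF assms(5)]]
      by (intro INF_mono')
    fix \<epsilon> \<kappa> :: real assume "\<epsilon> \<in> {0<..}" "0 < \<kappa>"
    then have "\<exists>\<epsilon>'>0. \<forall>F \<delta>. sofic_sep_growth I le D \<sigma> act \<rho> rhoinf \<epsilon> F \<delta>
        \<le> sofic_sep_growth I le D \<sigma> act \<rho> rho2 \<epsilon>' F \<delta> + ereal \<kappa>"
      by (intro sofic_sep_growth_rhoinf_le_rho2[OF assms(1,5,3)]) auto
    then obtain \<epsilon>' where "0 < \<epsilon>'" and "\<forall>F \<delta>. sofic_sep_growth I le D \<sigma> act \<rho> rhoinf \<epsilon> F \<delta>
        \<le> sofic_sep_growth I le D \<sigma> act \<rho> rho2 \<epsilon>' F \<delta> + ereal \<kappa>"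
      by blast
    then show "\<exists>\<epsilon>'\<in>{0<..}. (INF F\<in>{F. finite F}. INF \<delta>\<in>{0<..}. sofic_sep_growth I le D \<sigma> act \<rho> rhoinf \<epsilon> F \<delta>)
        \<le> (INF F\<in>{F. finite F}. INF \<delta>\<in>{0<..}. sofic_sep_growth I le D \<sigma> act \<rho> rho2 \<epsilon>' F \<delta>) + ereal \<kappa>"
      by (intro bexI[of _ \<epsilon>'] INF_le_INF_add) auto
  qed
  finally show ?thesis unfolding sofic_sep_growth_def .
qed

end
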